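(* Let $P$ be a finite poset and let $I\in\mathcal{IC}(P)$ contain all maximal elements of $P$. Then $\mathrm{Row}(I)=P-I$.
   Context: All posets are finite. For a poset $P$, a subset $I\subseteq P$ is interval-closed if for all $x,y\in I$ and $z\in P$ with $x\le z\le y$ we have $z\in I$; $\mathcal{IC}(P)$ is the set of interval-closed subsets of $P$. For $x\in P$ the toggle $t_x:\mathcal{IC}(P)\to\mathcal{IC}(P)$ is defined by $t_x(I)=I\triangle\{x\}$ if $I\triangle\{x\}\in\mathcal{IC}(P)$ and $t_x(I)=I$ otherwise. Rowmotion is $\mathrm{Row}=t_{x_1}\circ t_{x_2}\circ\cdots\circ t_{x_N}:\mathcal{IC}(P)\to\mathcal{IC}(P)$, where $(x_1,\dots,x_N)$ is a linear extension of $P$ (so elements are toggled from the top of the poset down); this does not depend on the choice of linear extension. *)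

theory Defs
  imports Main
begin

definition interval_closed :: "'a::order set \<Rightarrow> 'a set \<Rightarrow> bool" where
  "interval_closed P I \<longleftrightarrow> I \<subseteq> P \<and>
     (\<forall>x\<in>I. \<forall>y\<in>I. \<forall>z\<in>P. x \<le> z \<and> z \<le> y \<longrightarrow> z \<in> I)"

definition IC :: "'a::order set \<Rightarrow> 'a set set" where
  "IC P = {I. interval_closed P I}"

definition toggle :: "'a::order set \<Rightarrow> 'a \<Rightarrow> 'a set \<Rightarrow> 'a set" where
  "toggle P x I = (if interval_closed P ((if x \<in> I then I - {x} else insert x I)) then (if x \<in> I then I - {x} else insert x I) else I)"

definition linear_extension :: "'a::order set \<Rightarrow> 'a list \<Rightarrow> bool" where
  "linear_extension P xs \<longleftrightarrow> distinct xs \<and> set xs = P \<and>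
     (\<forall>i<length xs. \<forall>j<length xs. xs ! i < xs ! j \<longrightarrow> i < j)"

text \<open>Rowmotion w.r.t. the linear extension (x1,...,xN):
  Row = t_{x1} o t_{x2} o ... o t_{xN}, i.e. t_{xN} is applied first.\<close>

definition rowmotion :: "'a::order set \<Rightarrow> 'a list \<Rightarrow> 'a set \<Rightarrow> 'a set" where
  "rowmotion P xs = foldr (\<lambda>x f. toggle P x \<circ> f) xs id"

definition maximal_elements :: "'a::order set \<Rightarrow> 'a set" where
  "maximal_elements P = {x\<in>P. \<not> (\<exists>y\<in>P. x < y)}"

end

theory Submission
  imports Defs
begin

text \<open>Toggling from the top down, once the elements of an up-closed set S have been
  toggled the current set is I \<triangle> S. This set is again interval-closed: for
  b \<in> S - I some maximal element m \<ge> b lies in I, so no element of I lies below b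
  (it would force b \<in> I); and below an element of I - S nothing of S can occur since S is
  up-closed. Hence every toggle succeeds, and at the end I \<triangle> P = P - I.\<close>

definition up_closed :: "'a::order set \<Rightarrow> 'a set \<Rightarrow> bool" where
  "up_closed P S \<longleftrightarrow> S \<subseteq> P \<and> (\<forall>s\<in>S. \<forall>y\<in>P. s \<le> y \<longrightarrow> y \<in> S)"

lemma exists_maximal_element_above:
  assumes "finite P" "b \<in> P"
  shows "\<exists>m\<in>maximal_elements P. b \<le> m"
proof -
  obtain m where m: "m \<in> P" "b \<le> m" "\<forall>c\<in>P. m \<le> c \<longrightarrow> m = c"
    using finite_has_maximal2[OF assms] by blast
  then have "m \<in> maximal_elements P"
    unfolding maximal_elements_def using less_le by auto
  with m show ?thesis by blast
qed

lemma interval_closed_sym_diff_up_closed: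
  fixes P :: "'a::order set"
  assumes fin: "finite P" and I: "interval_closed P I"
    and max: "maximal_elements P \<subseteq> I" and S: "up_closed P S"
  shows "interval_closed P (sym_diff I S)"
proof -
  have IP: "I \<subseteq> P" and SP: "S \<subseteq> P"
    using I S unfolding interval_closed_def up_closed_def by auto
  have convex: "\<And>a b z. a \<in> I \<Longrightarrow> b \<in> I \<Longrightarrow> z \<in> P \<Longrightarrow> a \<le> z \<Longrightarrow> z \<le> b \<Longrightarrow> z \<in> I"
    using I unfolding interval_closed_def by blast
  have up: "\<And>s y. s \<in> S \<Longrightarrow> y \<in> P \<Longrightarrow> s \<le> y \<Longrightarrow> y \<in> S"
    using S unfolding up_closed_def by blast
  show ?thesis unfolding interval_closed_def
  proof (intro conjI ballI impI)
    show "sym_diff I S \<subseteq> P" using IP SP by blast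
  next
    fix a b z
    assume a: "a \<in> sym_diff I S" and b: "b \<in> sym_diff I S"
      and z: "z \<in> P" and between: "a \<le> z \<and> z \<le> b"
    show "z \<in> sym_diff I S"
    proof (cases "b \<in> S")
      case False
      then have "z \<notin> S" "a \<notin> S" using up between z IP b by blast+
      then have "z \<in> I" using a b False convex z between by blast
      with \<open>z \<notin> S\<close> show ?thesis by blast
    next
      case True
      then have "b \<notin> I" "b \<in> P" using b SP by auto
      then obtain m where m: "m \<in> I" "b \<le> m"
        using exists_maximal_element_above[OF fin] max by blast
      have "z \<notin> I"
        using convex[of z m b] m \<open>b \<notin> I\<close> \<open>b \<in> P\<close> between by blast
      moreover have "z \<in> S"
      proof (rule ccontr)
        assume "z \<notin> S"
        then have "a \<in> I" using up a z between by blast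
        then have "z \<in> I" using convex[of a m z] m z between by (meson order.trans)
        with \<open>z \<notin> I\<close> show False by blast
      qed
      ultimately show ?thesis by blast
    qed
  qed
qed

lemma toggle_eq_sym_diff:
  assumes "interval_closed P (sym_diff I {x})"
  shows "toggle P x I = sym_diff I {x}"
proof -
  have "(if x \<in> I then I - {x} else insert x I) = sym_diff I {x}" by auto
  with assms show ?thesis unfolding toggle_def by simp
qed

lemma rowmotion_Cons: "rowmotion P (x # xs) = toggle P x \<circ> rowmotion P xs"
  by (simp add: rowmotion_def)

lemma up_closed_tl:
  assumes "up_closed P (set (x # xs))" "distinct (x # xs)"
    and "sorted_wrt (\<lambda>a b. \<not> b < a) (x # xs)"
  shows "up_closed P (set xs)"
  using assms unfolding up_closed_def by (auto simp: le_less)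

lemma rowmotion_eq_sym_diff_up_closed:
  fixes P :: "'a::order set"
  assumes fin: "finite P" and I: "interval_closed P I"
    and max: "maximal_elements P \<subseteq> I"
  shows "up_closed P (set xs) \<Longrightarrow> distinct xs \<Longrightarrow> sorted_wrt (\<lambda>a b. \<not> b < a) xs
    \<Longrightarrow> rowmotion P xs I = sym_diff I (set xs)"
proof (induction xs)
  case Nil
  then show ?case by (simp add: rowmotion_def)
next
  case (Cons x xs)
  have IH: "rowmotion P xs I = sym_diff I (set xs)"
    using Cons.IH up_closed_tl[OF Cons.prems] Cons.prems by simp
  have "x \<notin> set xs" using Cons.prems(2) by simp
  then have step: "sym_diff (sym_diff I (set xs)) {x} = sym_diff I (set (x # xs))"
    by auto
  show ?case
    using interval_closed_sym_diff_up_closed[OF fin I max Cons.prems(1)]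
    by (simp add: rowmotion_Cons IH toggle_eq_sym_diff step)
qed

lemma linear_extension_sorted_wrt:
  assumes "linear_extension P xs"
  shows "sorted_wrt (\<lambda>a b. \<not> b < a) xs"
  unfolding sorted_wrt_iff_nth_less
proof (intro allI impI notI)
  fix i j assume "i < j" "j < length xs" "xs ! j < xs ! i"
  with assms show False
    unfolding linear_extension_def by (meson less_asym order.strict_trans)
qed

theorem lemma2p9:
  fixes P :: "'a::order set" and I :: "'a set" and xs :: "'a list"
  assumes "finite P"
    and "I \<in> IC P"
    and "maximal_elements P \<subseteq> I"
    and "linear_extension P xs"
  shows "rowmotion P xs I = P - I"
proof -
  have I: "interval_closed P I" using assms(2) by (simp add: IC_def)
  have xs: "distinct xs" "set xs = P"
    using assms(4) unfolding linear_extension_def by auto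
  then have "up_closed P (set xs)" by (simp add: up_closed_def)
  then have "rowmotion P xs I = sym_diff I P"
    using rowmotion_eq_sym_diff_up_closed[OF assms(1) I assms(3)]
      linear_extension_sorted_wrt[OF assms(4)] xs by simp
  moreover have "I \<subseteq> P" using I by (simp add: interval_closed_def)
  ultimately show ?thesis by auto
qed

end
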